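(* There is no odd perfect number of the form $n = 5^{\alpha} M^{2\beta}$, where $\alpha$ and $\beta$ are positive integers and $M$ is a square-free positive integer with $5 \nmid M$.
   Context: A positive integer $n$ is perfect if $\sigma(n) = 2n$, where $\sigma(n)$ denotes the sum of all positive divisors of $n$. *)

theory Defs
  imports "HOL-Computational_Algebra.Squarefree"
begin

definition divisor_sum :: "nat \<Rightarrow> nat" where
  "divisor_sum n = (\<Sum>d\<in>{d. d dvd n}. d)"

definition perfect :: "nat \<Rightarrow> bool" where
  "perfect n \<longleftrightarrow> n > 0 \<and> divisor_sum n = 2 * n"

end

(*
  Write m = 2 beta. Multiplicativity gives
    sigma(n) = sigma(5^alpha) * prod_{q | M} sigma(q^m) = 2 * 5^alpha * M^m.
  Each sigma(q^m) is a sum of m + 1 odd terms, hence odd, so alpha is odd and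
  1 + 5 divides sigma(5^alpha): thus 3 | M. If 5 did not divide m + 1, Fermat's
  little theorem would show that 5 divides no sigma(q^m), contradicting 5 | 2n.
  So 5 | m + 1, and then 11^2 = sigma(3^4) | sigma(3^m) and
  5 * 3221 = sigma(11^4) | sigma(11^m) give 11 | M and 3221 | M. Since
  11 and 3221 are 1 (mod 5), both sigma(11^m) and sigma(3221^m) are multiples of 5,
  which forces alpha >= 2. Hence 5^2 * 3^4 * 11 divides n; but this number is
  abundant, and a divisor of a perfect number cannot be abundant.
*)

theory Submission
  imports Defs "HOL-Number_Theory.Pocklington"
begin

lemma divisor_sum_mult:
  fixes a b :: nat
  assumes "coprime a b" "0 < a" "0 < b"
  shows "divisor_sum (a * b) = divisor_sum a * divisor_sum b"
proof -
  let ?D = "\<lambda>n::nat. {d. d dvd n}"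
  have "inj_on (\<lambda>(x, y). x * y) (?D a \<times> ?D b)"
  proof (rule inj_onI, clarsimp)
    fix x y u v :: nat
    assume dvd: "x dvd a" "y dvd b" "u dvd a" "v dvd b" and eq: "x * y = u * v"
    have "x dvd u"
      using coprime_divisors[OF dvd(1,4) assms(1)] eq by (metis coprime_dvd_mult_left_iff dvd_triv_left)
    moreover have "u dvd x"
      using coprime_divisors[OF dvd(3,2) assms(1)] eq by (metis coprime_dvd_mult_left_iff dvd_triv_left)
    ultimately have "x = u" by (rule dvd_antisym)
    moreover have "x \<noteq> 0" using dvd(1) assms(2) by auto
    ultimately show "x = u \<and> y = v" using eq by simp
  qed
  moreover have "(\<lambda>(x, y). x * y) ` (?D a \<times> ?D b) = ?D (a * b)"
    by (auto intro: mult_dvd_mono dest: division_decomp)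
  ultimately have "divisor_sum (a * b) = (\<Sum>(x, y)\<in>?D a \<times> ?D b. x * y)"
    unfolding divisor_sum_def by (metis (no_types, lifting) sum.reindex_cong)
  also have "\<dots> = divisor_sum a * divisor_sum b"
    unfolding divisor_sum_def sum_product sum.cartesian_product ..
  finally show ?thesis .
qed

lemma divisor_sum_prime_power:
  assumes "prime p"
  shows "divisor_sum (p ^ k) = (\<Sum>i<Suc k. p ^ i)"
proof -
  have "{d. d dvd p ^ k} = (\<lambda>i. p ^ i) ` {..k}"
    using divides_primepow_nat[OF assms] by auto
  moreover have "inj_on (\<lambda>i. p ^ i) {..k}"
    using prime_gt_1_nat[OF assms] by (auto simp: inj_on_def)
  ultimately show ?thesis
    unfolding divisor_sum_def by (simp add: sum.reindex lessThan_Suc_atMost)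
qed

lemma divisor_sum_prod_prime_powers:
  assumes "finite A" "\<And>p. p \<in> A \<Longrightarrow> prime p"
  shows "divisor_sum (\<Prod>p\<in>A. p ^ e p) = (\<Prod>p\<in>A. divisor_sum (p ^ e p))"
  using assms
proof (induction A rule: finite_induct)
  case empty
  then show ?case by (simp add: divisor_sum_def)
next
  case (insert p A)
  have "coprime (p ^ e p) (\<Prod>q\<in>A. q ^ e q)"
    using insert.hyps(2) insert.prems
    by (intro prod_coprime_right) (auto intro: coprime_power_left_iff[THEN iffD2] primes_coprime)
  moreover have "0 < p ^ e p" "0 < (\<Prod>q\<in>A. q ^ e q)"
    using insert.prems by (simp_all add: prime_gt_0_nat prod_pos)
  ultimately have "divisor_sum (p ^ e p * (\<Prod>q\<in>A. q ^ e q))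
      = divisor_sum (p ^ e p) * divisor_sum (\<Prod>q\<in>A. q ^ e q)"
    by (rule divisor_sum_mult)
  then show ?case
    using insert by simp
qed

lemma divisor_sum_squarefree_power:
  assumes "squarefree M"
  shows "divisor_sum (M ^ m) = (\<Prod>q\<in>prime_factors M. divisor_sum (q ^ m))"
proof -
  have "M \<noteq> 0"
    using assms by (metis not_squarefree_0)
  then have "M = (\<Prod>q\<in>prime_factors M. q ^ multiplicity q M)"
    by (simp add: prime_factorization_nat)
  also have "\<dots> = (\<Prod>q\<in>prime_factors M. q)"
    using assms \<open>M \<noteq> 0\<close> by (simp add: squarefree_factorial_semiring')
  finally have "M ^ m = (\<Prod>q\<in>prime_factors M. q) ^ m"
    by (rule arg_cong)
  also have "\<dots> = (\<Prod>q\<in>prime_factors M. q ^ m)"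
    by (rule prod_power_distrib)
  finally show ?thesis
    using divisor_sum_prod_prime_powers[of "prime_factors M" "\<lambda>_. m"]
    by (simp add: in_prime_factors_imp_prime)
qed

lemma divisor_sum_eq_sum_cofactors:
  assumes "0 < n"
  shows "divisor_sum n = (\<Sum>d | d dvd n. n div d)"
proof -
  have cofactor: "n div (n div d) = d" "n div d dvd n" if "d dvd n" for d
    using that assms by (auto elim!: dvdE)
  show ?thesis
    unfolding divisor_sum_def
    by (rule sum.reindex_bij_witness[of _ "\<lambda>d. n div d" "\<lambda>d. n div d"]) (auto simp: cofactor)
qed

lemma divisor_sum_mult_le_of_dvd:
  fixes a b :: nat
  assumes "a dvd b" "0 < b"
  shows "divisor_sum a * b \<le> divisor_sum b * a"
proof -
  obtain l where b: "b = a * l" using assms(1) ..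
  with assms(2) have "0 < a" by simp
  have "a div d * b = b div d * a" if "d dvd a" for d
    using that \<open>0 < a\<close> by (auto simp: b elim!: dvdE)
  then have "divisor_sum a * b = (\<Sum>d | d dvd a. b div d * a)"
    unfolding divisor_sum_eq_sum_cofactors[OF \<open>0 < a\<close>] sum_distrib_right by simp
  also have "\<dots> \<le> (\<Sum>d | d dvd b. b div d * a)"
    using assms by (intro sum_mono2) (auto simp: b)
  also have "\<dots> = divisor_sum b * a"
    unfolding divisor_sum_eq_sum_cofactors[OF \<open>0 < b\<close>] sum_distrib_right ..
  finally show ?thesis .
qed

lemma geometric_sum_dvd_geometric_sum_mult:
  fixes q :: "'a::comm_semiring_1"
  shows "(\<Sum>i<d. q ^ i) dvd (\<Sum>i<d * k. q ^ i)"
proof -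
  have "(\<Sum>i<d * k. q ^ i) = (\<Sum>j<k. \<Sum>i<d. q ^ (j * d + i))"
    unfolding mult.commute[of d k] sum.nat_group[symmetric]
    by (simp add: sum.atLeastLessThan_shift_0 atLeast0LessThan)
  also have "\<dots> = (\<Sum>j<k. q ^ (j * d)) * (\<Sum>i<d. q ^ i)"
    by (simp add: power_add sum_product)
  finally show ?thesis
    by simp
qed

lemma geometric_sum_cong_length:
  fixes q r :: nat
  assumes "[q = 1] (mod r)"
  shows "[(\<Sum>i<k. q ^ i) = k] (mod r)"
proof -
  have "[(\<Sum>i<k. q ^ i) = (\<Sum>i<k. 1)] (mod r)"
    using cong_pow[OF assms] by (intro cong_sum) simp
  then show ?thesis
    by simp
qed

lemma odd_geometric_sum_iff:
  fixes q :: nat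
  assumes "odd q"
  shows "odd (\<Sum>i<k. q ^ i) \<longleftrightarrow> odd k"
proof -
  have "[q = 1] (mod 2)"
    using assms by (simp add: cong_def odd_iff_mod_2_eq_one)
  then show ?thesis
    using geometric_sum_cong_length by (auto simp: cong_def odd_iff_mod_2_eq_one)
qed

lemma geometric_sum_shift:
  fixes q :: "'a::comm_semiring_1"
  shows "q * (\<Sum>i<d. q ^ i) + 1 = (\<Sum>i<d. q ^ i) + q ^ d"
  using sum.lessThan_Suc_shift[of "\<lambda>i. q ^ i" d] by (simp add: sum_distrib_left add.commute)

lemma prime_not_dvd_geometric_sum:
  fixes p q d :: nat
  assumes "prime p" "coprime d (p - 1)" "\<not> p dvd d"
  shows "\<not> p dvd (\<Sum>i<d. q ^ i)"
proof
  assume dvd: "p dvd (\<Sum>i<d. q ^ i)"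
  then have "[(\<Sum>i<d. q ^ i) = 0] (mod p)"
    by (simp add: cong_0_iff)
  then have "[q * (\<Sum>i<d. q ^ i) + 1 = q * 0 + 1] (mod p)" "[(\<Sum>i<d. q ^ i) + q ^ d = 0 + q ^ d] (mod p)"
    by (intro cong_add cong_mult cong_refl; assumption)+
  then have q_pow: "[q ^ d = 1] (mod p)"
    by (metis geometric_sum_shift cong_sym cong_trans mult_zero_right add_0)
  have "\<not> p dvd q"
  proof
    assume "p dvd q"
    moreover have "0 < d" using assms(3) by (cases d) auto
    ultimately have "[q ^ d = 0] (mod p)"
      using assms(1) by (simp add: cong_0_iff prime_dvd_power_iff)
    with q_pow have "[1 = 0] (mod p)"
      by (metis cong_sym cong_trans)
    with assms(1) show False
      by (simp add: cong_0_iff)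
  qed
  with assms(1) have "[q ^ (p - 1) = 1] (mod p)"
    by (rule fermat_theorem)
  with q_pow have "ord p q dvd gcd d (p - 1)"
    by (simp only: ord_divides gcd_greatest)
  with assms(2) have "[q = 1] (mod p)"
    using ord[of q p] by simp
  then have "[(\<Sum>i<d. q ^ i) = d] (mod p)"
    by (rule geometric_sum_cong_length)
  with dvd assms(3) show False
    by (simp add: cong_dvd_iff)
qed

definition abundant :: "nat \<Rightarrow> bool" where
  "abundant n \<longleftrightarrow> 2 * n < divisor_sum n"

lemma not_abundant_dvd_perfect:
  assumes "perfect n" "d dvd n"
  shows "\<not> abundant d"
proof -
  have "0 < n" "divisor_sum n = 2 * n"
    using assms(1) unfolding perfect_def by auto
  then have "divisor_sum d * n \<le> (2 * d) * n"
    using divisor_sum_mult_le_of_dvd[OF assms(2)] by (simp add: ac_simps)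
  then show ?thesis
    using \<open>0 < n\<close> by (simp add: abundant_def)
qed

lemma abundant_22275: "abundant (5\<^sup>2 * 3 ^ 4 * 11)"
proof -
  have coprime_factors: "coprime (5\<^sup>2 * 3 ^ 4 :: nat) (11 ^ 1)" "coprime (5\<^sup>2 :: nat) (3 ^ 4)"
    by (simp_all only: coprime_mult_left_iff coprime_power_left_iff coprime_power_right_iff)
       (simp_all add: primes_coprime)
  have "divisor_sum (5\<^sup>2) = 31" "divisor_sum (3 ^ 4) = 121" "divisor_sum (11 ^ 1) = 12"
    using divisor_sum_prime_power[of 5 2] divisor_sum_prime_power[of 3 4] divisor_sum_prime_power[of 11 1]
    by (simp_all add: lessThan_nat_numeral)
  then have "divisor_sum (5\<^sup>2 * 3 ^ 4 * 11 ^ 1) = 31 * 121 * 12"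
    using divisor_sum_mult[OF coprime_factors(1)] divisor_sum_mult[OF coprime_factors(2)] by simp
  then show ?thesis
    by (simp add: abundant_def)
qed

lemma prime_nat_by_trial_division:
  fixes p b :: nat
  assumes "1 < p" "p < (b + 1)\<^sup>2" "\<forall>d\<in>{2..b}. \<not> d dvd p"
  shows "prime p"
proof (rule ccontr)
  assume "\<not> prime p"
  with assms(1) obtain d where "d dvd p" "d \<noteq> 1" "d \<noteq> p"
    by (auto simp: prime_nat_iff)
  from \<open>d dvd p\<close> obtain e where p: "p = d * e" ..
  have "1 < d"
    using p assms(1) \<open>d \<noteq> 1\<close> by (cases d) auto
  have "1 < e"
    using p assms(1) \<open>d \<noteq> p\<close> by (cases e) auto
  define c where "c = min d e"
  have "c dvd p" "2 \<le> c"
    using p \<open>1 < d\<close> \<open>1 < e\<close> by (auto simp: c_def min_def)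
  moreover have "c \<le> b"
  proof (rule ccontr)
    assume "\<not> c \<le> b"
    then have "(b + 1) * (b + 1) \<le> c * c"
      by (intro mult_le_mono) auto
    also have "\<dots> \<le> p"
      using p by (simp add: c_def mult_le_mono)
    finally show False
      using assms(2) by (simp add: power2_eq_square)
  qed
  ultimately show False
    using assms(3) by auto
qed

lemma prime_3221: "prime (3221::nat)"
  by (rule prime_nat_by_trial_division[where b = 56]) (simp_all add: atLeastAtMost_upt upt_rec)

locale odd_perfect_5_pow_squarefree_pow =
  fixes n \<alpha> m M :: nat
  assumes n_eq: "n = 5 ^ \<alpha> * M ^ m"
    and \<alpha>_pos: "0 < \<alpha>" and m_pos: "0 < m" and m_even: "even m"
    and M_squarefree: "squarefree M" and five_not_dvd_M: "\<not> 5 dvd M"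
    and n_odd: "odd n" and n_perfect: "perfect n"
begin

lemma M_nonzero: "M \<noteq> 0"
  using M_squarefree by (metis not_squarefree_0)

lemma divisor_sum_eq_double: "divisor_sum n = 2 * n"
  using n_perfect by (simp add: perfect_def)

lemma divisor_sum_five_power: "divisor_sum (5 ^ \<alpha>) = (\<Sum>i<Suc \<alpha>. 5 ^ i)"
  by (rule divisor_sum_prime_power) simp

lemma divisor_sum_prime_factor_power:
  "q \<in> prime_factors M \<Longrightarrow> divisor_sum (q ^ m) = (\<Sum>i<Suc m. q ^ i)"
  using divisor_sum_prime_power in_prime_factors_imp_prime by blast

lemma divisor_sum_factorization:
  "divisor_sum n = divisor_sum (5 ^ \<alpha>) * (\<Prod>q\<in>prime_factors M. divisor_sum (q ^ m))"
proof -
  have "coprime (5 ^ \<alpha>) (M ^ m)"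
    using five_not_dvd_M by (simp add: prime_imp_coprime)
  then show ?thesis
    using M_nonzero by (simp add: n_eq divisor_sum_mult divisor_sum_squarefree_power[OF M_squarefree])
qed

lemma prod_divisor_sum_dvd:
  "A \<subseteq> prime_factors M \<Longrightarrow> (\<Prod>q\<in>A. divisor_sum (q ^ m)) dvd divisor_sum n"
  unfolding divisor_sum_factorization by (intro dvd_mult prod_dvd_prod_subset) auto

lemma geometric_sum_dvd_divisor_sum:
  assumes "q \<in> prime_factors M" "d dvd Suc m"
  shows "(\<Sum>i<d. q ^ i) dvd divisor_sum n"
proof -
  obtain k where "Suc m = d * k"
    using assms(2) ..
  then have "(\<Sum>i<d. q ^ i) dvd divisor_sum (q ^ m)"
    unfolding divisor_sum_prime_factor_power[OF assms(1)]
    by (simp only: geometric_sum_dvd_geometric_sum_mult)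
  also have "\<dots> dvd divisor_sum n"
    using assms(1) prod_divisor_sum_dvd[of "{q}"] by simp
  finally show ?thesis .
qed

lemma prime_factor_of_dvd_divisor_sum:
  assumes "p dvd divisor_sum n" "prime p" "p \<noteq> 2" "p \<noteq> 5"
  shows "p \<in> prime_factors M"
proof -
  have "\<not> p dvd 2" "\<not> p dvd 5"
    using assms(2-4) primes_dvd_imp_eq[of p 2] primes_dvd_imp_eq[of p 5] by auto
  moreover have "p dvd 2 * n"
    using assms(1) by (simp only: divisor_sum_eq_double)
  ultimately have "p dvd M ^ m"
    using assms(2) \<alpha>_pos by (simp add: n_eq prime_dvd_mult_iff prime_dvd_power_iff)
  then show ?thesis
    using assms(2) m_pos M_nonzero by (simp add: prime_dvd_power_iff in_prime_factors_iff)
qed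

lemma \<alpha>_odd: "odd \<alpha>"
proof -
  have "odd M"
    using n_odd m_pos by (simp add: n_eq)
  have "odd (divisor_sum (q ^ m))" if "q \<in> prime_factors M" for q
  proof -
    have "odd q"
      using that \<open>odd M\<close> by (metis dvd_trans in_prime_factors_imp_dvd)
    then show ?thesis
      unfolding divisor_sum_prime_factor_power[OF that] odd_geometric_sum_iff[OF \<open>odd q\<close>]
      using m_even by simp
  qed
  then have "odd (\<Prod>q\<in>prime_factors M. divisor_sum (q ^ m))"
    by (simp add: even_prod_iff)
  moreover have "even (divisor_sum n)"
    by (simp add: divisor_sum_eq_double)
  ultimately have "even (divisor_sum (5 ^ \<alpha>))"
    by (simp add: divisor_sum_factorization)
  then show ?thesis
    unfolding divisor_sum_five_power odd_geometric_sum_iff[of 5, simplified] by simp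
qed

lemma prime_factor_3: "3 \<in> prime_factors M"
proof -
  obtain k where "Suc \<alpha> = 2 * k"
    using \<alpha>_odd by (metis evenE even_Suc)
  have "2 * 3 = (\<Sum>i<2. 5 ^ i :: nat)"
    by (simp add: lessThan_nat_numeral)
  also have "\<dots> dvd divisor_sum (5 ^ \<alpha>)"
    unfolding divisor_sum_five_power \<open>Suc \<alpha> = 2 * k\<close>
    by (rule geometric_sum_dvd_geometric_sum_mult)
  also have "\<dots> dvd divisor_sum n"
    by (simp add: divisor_sum_factorization)
  finally have "3 dvd divisor_sum n"
    by (rule dvd_mult_right)
  then show ?thesis
    by (rule prime_factor_of_dvd_divisor_sum) simp_all
qed

lemma five_dvd_Suc_m: "5 dvd Suc m"
proof (rule ccontr)
  assume "\<not> 5 dvd Suc m"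
  moreover have "coprime (Suc m) (2 ^ 2)"
    using m_even by (simp only: coprime_power_right_iff) simp
  ultimately have "\<not> 5 dvd divisor_sum (q ^ m)" if "q \<in> prime_factors M" for q
    unfolding divisor_sum_prime_factor_power[OF that]
    by (intro prime_not_dvd_geometric_sum) simp_all
  then have "\<not> 5 dvd (\<Prod>q\<in>prime_factors M. divisor_sum (q ^ m))"
    by (simp add: prime_dvd_prod_iff)
  moreover have "\<not> 5 dvd divisor_sum (5 ^ \<alpha>)"
  proof -
    have "divisor_sum (5 ^ \<alpha>) = 5 * (\<Sum>i<\<alpha>. 5 ^ i) + 1"
      unfolding divisor_sum_five_power geometric_sum_shift by simp
    then show ?thesis
      by presburger
  qed
  ultimately have "\<not> 5 dvd divisor_sum n"
    unfolding divisor_sum_factorization by (simp add: prime_dvd_mult_iff)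
  moreover have "5 dvd n"
    using \<alpha>_pos by (simp add: n_eq dvd_power)
  then have "5 dvd divisor_sum n"
    by (simp add: divisor_sum_eq_double)
  ultimately show False ..
qed

lemma prime_factor_11: "11 \<in> prime_factors M"
proof -
  have "11 * 11 = (\<Sum>i<5. 3 ^ i :: nat)"
    by (simp add: lessThan_nat_numeral)
  also have "\<dots> dvd divisor_sum n"
    using prime_factor_3 five_dvd_Suc_m by (rule geometric_sum_dvd_divisor_sum)
  finally have "11 dvd divisor_sum n"
    by (rule dvd_mult_left)
  then show ?thesis
    by (rule prime_factor_of_dvd_divisor_sum) simp_all
qed

lemma prime_factor_3221: "3221 \<in> prime_factors M"
proof -
  have "5 * 3221 = (\<Sum>i<5. 11 ^ i :: nat)"
    by (simp add: lessThan_nat_numeral)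
  also have "\<dots> dvd divisor_sum n"
    using prime_factor_11 five_dvd_Suc_m by (rule geometric_sum_dvd_divisor_sum)
  finally have "3221 dvd divisor_sum n"
    by (rule dvd_mult_right)
  then show ?thesis
    using prime_3221 by (rule prime_factor_of_dvd_divisor_sum) simp_all
qed

lemma \<alpha>_ge_2: "2 \<le> \<alpha>"
proof -
  have five_dvd: "5 dvd divisor_sum (q ^ m)" if "q \<in> prime_factors M" "[q = 1] (mod 5)" for q
  proof -
    have "[divisor_sum (q ^ m) = Suc m] (mod 5)"
      unfolding divisor_sum_prime_factor_power[OF that(1)] using that(2) by (rule geometric_sum_cong_length)
    then show ?thesis
      using five_dvd_Suc_m by (simp only: cong_dvd_iff)
  qed
  have "5 * 5 dvd divisor_sum (11 ^ m) * divisor_sum (3221 ^ m)"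
    using prime_factor_11 prime_factor_3221
    by (intro mult_dvd_mono five_dvd) (simp_all add: cong_def)
  also have "\<dots> = (\<Prod>q\<in>{11, 3221}. divisor_sum (q ^ m))"
    by simp
  also have "\<dots> dvd divisor_sum n"
    using prime_factor_11 prime_factor_3221 by (intro prod_divisor_sum_dvd) simp
  finally have "5 ^ 2 dvd 2 * n"
    by (simp only: divisor_sum_eq_double power2_eq_square)
  then have "5 ^ 2 dvd 5 ^ \<alpha> * (2 * M ^ m)"
    by (simp only: n_eq mult.left_commute)
  moreover have "coprime (5 ^ 2) (2 * M ^ m)"
    using five_not_dvd_M
    by (simp only: coprime_power_left_iff coprime_mult_right_iff) (simp add: prime_imp_coprime)
  ultimately have "5 ^ 2 dvd (5::nat) ^ \<alpha>"
    by (simp only: coprime_dvd_mult_left_iff)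
  then show ?thesis
    using dvd_power_iff_le[of 5 2 \<alpha>] by simp
qed

lemma dvd_n_22275: "5\<^sup>2 * 3 ^ 4 * 11 dvd n"
proof -
  have "3 * 11 dvd M"
    using prime_factor_3 prime_factor_11
    by (intro divides_mult) (auto simp: in_prime_factors_iff primes_coprime)
  then have "(3 * 11) ^ m dvd M ^ m"
    by (rule dvd_power_same)
  moreover have "3 ^ 4 * 11 dvd (3 * 11 :: nat) ^ m"
  proof -
    have "4 \<le> m"
      using five_dvd_Suc_m by presburger
    then have "3 ^ 4 dvd (3::nat) ^ m"
      by (rule le_imp_power_dvd)
    moreover have "11 dvd (11::nat) ^ m"
      using m_pos by (simp add: dvd_power)
    ultimately show ?thesis
      unfolding power_mult_distrib by (rule mult_dvd_mono)
  qed
  ultimately have "3 ^ 4 * 11 dvd M ^ m"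
    by (rule dvd_trans[rotated])
  moreover have "5\<^sup>2 dvd (5::nat) ^ \<alpha>"
    using \<alpha>_ge_2 by (rule le_imp_power_dvd)
  ultimately show ?thesis
    unfolding n_eq mult.assoc by (rule mult_dvd_mono[rotated])
qed

end

theorem theorem1p2:
  fixes n \<alpha> \<beta> M :: nat
  assumes "\<alpha> > 0" and "\<beta> > 0" and "M > 0" and "squarefree M" and "\<not> 5 dvd M"
    and "n = 5 ^ \<alpha> * M ^ (2 * \<beta>)"
  shows "\<not> (odd n \<and> perfect n)"
proof
  assume "odd n \<and> perfect n"
  then interpret odd_perfect_5_pow_squarefree_pow n \<alpha> "2 * \<beta>" M
    using assms by unfold_locales auto
  have "\<not> abundant (5\<^sup>2 * 3 ^ 4 * 11)"
    using n_perfect dvd_n_22275 by (rule not_abundant_dvd_perfect)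
  then show False
    using abundant_22275 by contradiction
qed

end
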